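(* Let $\widehat A=\mathbb{C}[[x,y,z]]$ with maximal ideal $\widehat M=(x,y,z)$, and let $F=(f,g,h)$ be a Poisson triple on $\widehat A$ such that at most one of $f,g,h$ lies in $\widehat M$. Then $F$ is m-exact, i.e. there exist $b,d\in\widehat A$ with $F=b\,\mathrm{grad}(d)=(b d_x,b d_y,b d_z)$.
   Context: $F\in\widehat A^3$ is a Poisson triple if there is a Poisson bracket on $\widehat A$ with $\{y,z\}=f$, $\{z,x\}=g$, $\{x,y\}=h$. Subscripts denote formal partial derivatives. *)

theory Defs
  imports "HOL-Computational_Algebra.Formal_Power_Series"
begin

text \<open>The ring C[[x,y,z]] is realised as the iterated power series ring
  C[[x]][[y]][[z]] (canonically isomorphic as C-algebras).  The coefficient
  of x^i y^j z^k in f is  fps_nth (fps_nth (fps_nth f k) j) i.\<close>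

type_synonym fps3 = "complex fps fps fps"

definition X3 :: fps3 where "X3 = fps_const (fps_const fps_X)"
definition Y3 :: fps3 where "Y3 = fps_const fps_X"
definition Z3 :: fps3 where "Z3 = fps_X"

definition cst3 :: "complex \<Rightarrow> fps3" where "cst3 c = fps_const (fps_const (fps_const c))"

definition dx3 :: "fps3 \<Rightarrow> fps3" where
  "dx3 f = Abs_fps (\<lambda>k. Abs_fps (\<lambda>j. fps_deriv (fps_nth (fps_nth f k) j)))"
definition dy3 :: "fps3 \<Rightarrow> fps3" where
  "dy3 f = Abs_fps (\<lambda>k. fps_deriv (fps_nth f k))"
definition dz3 :: "fps3 \<Rightarrow> fps3" where
  "dz3 f = fps_deriv f"

definition in_max3 :: "fps3 \<Rightarrow> bool" where
  "in_max3 f \<longleftrightarrow> fps_nth (fps_nth (fps_nth f 0) 0) 0 = 0"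

definition poisson_bracket3 :: "(fps3 \<Rightarrow> fps3 \<Rightarrow> fps3) \<Rightarrow> bool" where
  "poisson_bracket3 P \<longleftrightarrow>
     (\<forall>a b c. P (a + b) c = P a c + P b c) \<and>
     (\<forall>t a b. P (cst3 t * a) b = cst3 t * P a b) \<and>
     (\<forall>a b. P a b = - P b a) \<and>
     (\<forall>a b c. P (a * b) c = a * P b c + b * P a c) \<and>
     (\<forall>a b c. P a (P b c) + P b (P c a) + P c (P a b) = 0)"

definition poisson_triple3 :: "fps3 \<Rightarrow> fps3 \<Rightarrow> fps3 \<Rightarrow> bool" where
  "poisson_triple3 f g h \<longleftrightarrow>
     (\<exists>P. poisson_bracket3 P \<and> P Y3 Z3 = f \<and> P Z3 X3 = g \<and> P X3 Y3 = h)"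

end

theory Submission
  imports Defs
begin

text \<open>The Jacobi identity for the bracket with \<open>{y,z} = f\<close>, \<open>{z,x} = g\<close>, \<open>{x,y} = h\<close> says
  exactly that \<open>F \<cdot> curl F = 0\<close>.  By hypothesis \<open>f\<close> or \<open>g\<close> is a unit, and after exchanging
  \<open>x\<close> and \<open>y\<close> we may assume it is \<open>f\<close>.  Writing \<open>F = f (1, q, r)\<close>, the condition
  \<open>F \<cdot> curl F = 0\<close> becomes the Frobenius integrability condition for the vector fields
  \<open>\<partial>\<^sub>y - q \<partial>\<^sub>x\<close> and \<open>\<partial>\<^sub>z - r \<partial>\<^sub>x\<close>.  A common first integral \<open>d\<close> with \<open>d\<^sub>x\<close> a unit is
  built by solving two linear first-order equations, one in \<open>y\<close> and one in \<open>z\<close>, coefficient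
  by coefficient; then \<open>F = (f / d\<^sub>x) grad d\<close>.\<close>

unbundle fps_syntax

definition fps_map :: "('a \<Rightarrow> 'b) \<Rightarrow> 'a fps \<Rightarrow> 'b fps" where
  "fps_map L f = Abs_fps (\<lambda>n. L (f $ n))"

lemma fps_map_nth [simp]: "fps_map L f $ n = L (f $ n)"
  by (simp add: fps_map_def)

definition derivation :: "('a::comm_ring_1 \<Rightarrow> 'a) \<Rightarrow> bool" where
  "derivation L \<longleftrightarrow> (\<forall>a b. L (a + b) = L a + L b) \<and> (\<forall>a b. L (a * b) = a * L b + L a * b)"

lemma derivation_add: "derivation L \<Longrightarrow> L (a + b) = L a + L b"
  by (simp add: derivation_def)

lemma derivation_mult: "derivation L \<Longrightarrow> L (a * b) = a * L b + L a * b"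
  by (simp add: derivation_def)

lemma derivation_0: "derivation L \<Longrightarrow> L 0 = 0"
  using derivation_add[of L 0 0] by simp

lemma derivation_minus: "derivation L \<Longrightarrow> L (- a) = - L a"
  using derivation_add[of L a "- a"] derivation_0[of L] by (simp add: add_eq_0_iff)

lemma derivation_diff: "derivation L \<Longrightarrow> L (a - b) = L a - L b"
  using derivation_add[of L a "- b"] derivation_minus[of L b] by simp

lemma derivation_sum: "derivation L \<Longrightarrow> L (sum f S) = (\<Sum>i\<in>S. L (f i))"
  by (induction S rule: infinite_finite_induct) (auto simp: derivation_0 derivation_add)

lemma derivation_of_nat_mult: "derivation L \<Longrightarrow> L (of_nat n * a) = of_nat n * L a"
  by (induction n) (simp_all add: derivation_0 derivation_add algebra_simps)

lemma derivation_fps_deriv: "derivation fps_deriv"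
  by (simp add: derivation_def)

lemma derivation_fps_map:
  assumes "derivation L"
  shows "derivation (fps_map L)"
  unfolding derivation_def
proof (intro conjI allI)
  fix a b :: "'a fps"
  show "fps_map L (a + b) = fps_map L a + fps_map L b"
    by (rule fps_ext) (simp add: derivation_add[OF assms])
  show "fps_map L (a * b) = a * fps_map L b + fps_map L a * b"
    by (rule fps_ext)
      (simp add: fps_mult_nth derivation_sum[OF assms] derivation_mult[OF assms] sum.distrib)
qed

lemma fps_deriv_fps_map:
  assumes "derivation L"
  shows "fps_deriv (fps_map L f) = fps_map L (fps_deriv f)"
  by (rule fps_ext) (simp only: fps_deriv_nth fps_map_nth derivation_of_nat_mult[OF assms])

lemma fps_dvd_1_if_nth_0_dvd_1:
  fixes f :: "'a::comm_ring_1 fps"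
  assumes "f $ 0 dvd 1"
  shows "f dvd 1"
proof -
  from assms obtain x where "x * f $ 0 = 1"
    by (metis dvdE mult.commute)
  then have "fps_left_inverse f x * f = 1"
    by (rule fps_left_inverse)
  then show ?thesis
    by (metis dvdI mult.commute)
qed

text \<open>\<open>iv n\<close> is meant to be an inverse of \<open>n + 1\<close>.\<close>
fun fps_ode_coeff :: "'a::comm_ring_1 fps \<Rightarrow> ('a \<Rightarrow> 'a) \<Rightarrow> (nat \<Rightarrow> 'a) \<Rightarrow> 'a \<Rightarrow> nat \<Rightarrow> 'a" where
  "fps_ode_coeff a L iv c 0 = c"
| "fps_ode_coeff a L iv c (Suc n) = iv n * (\<Sum>i=0..n. a $ i * L (fps_ode_coeff a L iv c (n - i)))"

lemma fps_linear_ode_exists: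
  fixes a :: "'a::comm_ring_1 fps"
  assumes "\<And>n. (of_nat (Suc n) :: 'a) dvd 1"
  shows "\<exists>u. u $ 0 = c \<and> fps_deriv u = a * fps_map L u"
proof -
  obtain iv where iv: "\<And>n. of_nat (Suc n) * iv n = (1::'a)"
  proof -
    have "\<forall>n. \<exists>v. of_nat (Suc n) * v = (1::'a)"
      using assms by (metis dvdE)
    then show ?thesis
      using that by metis
  qed
  let ?u = "Abs_fps (fps_ode_coeff a L iv c)"
  have "fps_deriv ?u $ n = (a * fps_map L ?u) $ n" for n
  proof -
    have "fps_deriv ?u $ n
        = (of_nat (Suc n) * iv n) * (\<Sum>i=0..n. a $ i * L (fps_ode_coeff a L iv c (n - i)))"
      by (simp only: fps_deriv_nth fps_ode_coeff.simps fps_nth_Abs_fps Suc_eq_plus1[symmetric]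
          mult.assoc)
    also have "\<dots> = (\<Sum>i=0..n. a $ i * L (fps_ode_coeff a L iv c (n - i)))"
      by (simp only: iv mult_1_left)
    also have "\<dots> = (a * fps_map L ?u) $ n"
      by (simp add: fps_mult_nth)
    finally show ?thesis .
  qed
  then show ?thesis
    by (intro exI[of _ ?u]) (simp add: fps_ext)
qed

lemma fps_linear_ode_zero:
  fixes a u :: "'a::comm_ring_1 fps"
  assumes "\<And>n. (of_nat (Suc n) :: 'a) dvd 1" and "L 0 = 0"
    and u: "fps_deriv u = a * fps_map L u" and "u $ 0 = 0"
  shows "u = 0"
proof -
  have "\<forall>m\<le>n. u $ m = 0" for n
  proof (induction n)
    case 0
    then show ?case using \<open>u $ 0 = 0\<close> by simp
  next
    case (Suc n)
    have "of_nat (Suc n) * u $ Suc n = fps_deriv u $ n"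
      by simp
    also have "\<dots> = (\<Sum>i=0..n. a $ i * L (u $ (n - i)))"
      by (simp add: u fps_mult_nth)
    also have "\<dots> = 0"
      using Suc.IH \<open>L 0 = 0\<close> by simp
    finally have "of_nat (Suc n) * u $ Suc n = 0" .
    moreover obtain v where "v * of_nat (Suc n) = (1::'a)"
      using assms(1)[of n] by (metis dvdE mult.commute)
    ultimately have "u $ Suc n = 0"
      by (metis mult.assoc mult_1 mult_zero_right)
    then show ?case
      using Suc.IH le_Suc_eq by auto
  qed
  then show ?thesis
    by (intro fps_ext) auto
qed

lemma dx3_eq: "dx3 = fps_map (fps_map fps_deriv)"
  by (simp add: dx3_def fps_map_def fun_eq_iff)

lemma dy3_eq: "dy3 = fps_map fps_deriv"
  by (simp add: dy3_def fps_map_def fun_eq_iff)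

lemma derivation_dx3: "derivation dx3"
  by (simp add: dx3_eq derivation_fps_map derivation_fps_deriv)

lemma derivation_dy3: "derivation dy3"
  by (simp add: dy3_eq derivation_fps_map derivation_fps_deriv)

lemma derivation_dz3: "derivation dz3"
  by (simp add: dz3_def[abs_def] derivation_fps_deriv)

lemma dz3_dx3: "dz3 (dx3 f) = dx3 (dz3 f)"
  by (simp add: dz3_def dx3_eq fps_deriv_fps_map derivation_fps_map derivation_fps_deriv)

lemma dz3_dy3: "dz3 (dy3 f) = dy3 (dz3 f)"
  by (simp add: dz3_def dy3_eq fps_deriv_fps_map derivation_fps_deriv)

lemma dx3_dy3: "dx3 (dy3 f) = dy3 (dx3 f)"
  by (rule fps_ext) (simp add: dx3_eq dy3_eq fps_deriv_fps_map derivation_fps_deriv)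

lemma d3_variables [simp]:
  "dx3 X3 = 1" "dx3 Y3 = 0" "dx3 Z3 = 0"
  "dy3 X3 = 0" "dy3 Y3 = 1" "dy3 Z3 = 0"
  "dz3 X3 = 0" "dz3 Y3 = 0" "dz3 Z3 = 1"
  by (auto intro!: fps_ext simp: dx3_eq dy3_eq dz3_def X3_def Y3_def Z3_def fps_X_def)

lemma d3_cst3 [simp]: "dx3 (cst3 t) = 0" "dy3 (cst3 t) = 0" "dz3 (cst3 t) = 0"
  by (auto intro!: fps_ext simp: dx3_eq dy3_eq dz3_def cst3_def)

lemmas d3_rules =
  derivation_add[OF derivation_dx3] derivation_diff[OF derivation_dx3]
  derivation_minus[OF derivation_dx3] derivation_mult[OF derivation_dx3]
  derivation_add[OF derivation_dy3] derivation_diff[OF derivation_dy3]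
  derivation_minus[OF derivation_dy3] derivation_mult[OF derivation_dy3]
  derivation_add[OF derivation_dz3] derivation_diff[OF derivation_dz3]
  derivation_minus[OF derivation_dz3] derivation_mult[OF derivation_dz3]

lemma fps3_dvd_1_if_not_in_max3: "\<not> in_max3 a \<Longrightarrow> a dvd 1"
  by (simp add: in_max3_def fps_dvd_1_if_nth_0_dvd_1)

lemma of_nat_Suc_dvd_1_fps: "(of_nat (Suc n) :: 'a::field_char_0 fps) dvd 1"
  by (rule fps_dvd_1_if_nth_0_dvd_1) (simp add: dvd_field_iff del: of_nat_Suc)

lemma of_nat_Suc_dvd_1_fps2: "(of_nat (Suc n) :: 'a::field_char_0 fps fps) dvd 1"
  by (rule fps_dvd_1_if_nth_0_dvd_1) (simp add: of_nat_Suc_dvd_1_fps del: of_nat_Suc)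

definition vanishes_below :: "nat \<Rightarrow> fps3 \<Rightarrow> bool" where
  "vanishes_below N a \<longleftrightarrow> (\<forall>i j k. i + j + k < N \<longrightarrow> a $ k $ j $ i = 0)"

lemma vanishes_below_add: "vanishes_below N a \<Longrightarrow> vanishes_below N b \<Longrightarrow> vanishes_below N (a + b)"
  by (simp add: vanishes_below_def)

lemma vanishes_below_Suc_mult_variable:
  assumes "vanishes_below N b"
  shows "vanishes_below (Suc N) (X3 * b)" "vanishes_below (Suc N) (Y3 * b)"
    "vanishes_below (Suc N) (Z3 * b)"
  using assms unfolding vanishes_below_def
  by (auto simp: X3_def Y3_def Z3_def fps_X_mult_nth)

lemma vanishes_below_all: "(\<And>N. vanishes_below N a) \<Longrightarrow> a = 0"
  by (intro fps_ext) (metis less_add_Suc2 vanishes_below_def fps_zero_nth)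

lemma fps3_decompose:
  "a = cst3 (a $ 0 $ 0 $ 0) + X3 * fps_const (fps_const (Abs_fps (\<lambda>i. a $ 0 $ 0 $ Suc i)))
     + Y3 * fps_const (Abs_fps (\<lambda>j. a $ 0 $ Suc j)) + Z3 * Abs_fps (\<lambda>k. a $ Suc k)"
  by (intro fps_ext) (auto simp: cst3_def X3_def Y3_def Z3_def split: nat.split)

text \<open>Induction on the total degree: the decomposition shows that \<open>E a\<close> vanishes below degree
  \<open>N + 1\<close> once every \<open>E b\<close> vanishes below degree \<open>N\<close>.\<close>
lemma fps3_map_eq_0:
  fixes E :: "fps3 \<Rightarrow> fps3"
  assumes add: "\<And>a b. E (a + b) = E a + E b" and cst: "\<And>t. E (cst3 t) = 0"
    and X: "\<And>b. E (X3 * b) = X3 * E b" and Y: "\<And>b. E (Y3 * b) = Y3 * E b"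
    and Z: "\<And>b. E (Z3 * b) = Z3 * E b"
  shows "E a = 0"
proof -
  have "\<forall>a. vanishes_below N (E a)" for N
  proof (induction N)
    case 0
    then show ?case by (simp add: vanishes_below_def)
  next
    case (Suc N)
    show ?case
    proof
      fix a
      show "vanishes_below (Suc N) (E a)"
        by (subst fps3_decompose)
          (simp add: add cst X Y Z Suc.IH vanishes_below_add vanishes_below_Suc_mult_variable)
    qed
  qed
  then show ?thesis
    by (intro vanishes_below_all) auto
qed

lemma derivation3_expand:
  fixes D :: "fps3 \<Rightarrow> fps3"
  assumes add: "\<And>a b. D (a + b) = D a + D b"
    and scalar: "\<And>t a. D (cst3 t * a) = cst3 t * D a"
    and leibniz: "\<And>a b. D (a * b) = a * D b + b * D a"
  shows "D a = dx3 a * D X3 + dy3 a * D Y3 + dz3 a * D Z3"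
proof -
  define E where "E a = D a - (dx3 a * D X3 + dy3 a * D Y3 + dz3 a * D Z3)" for a
  have "E (a + b) = E a + E b" for a b
    by (simp add: E_def add d3_rules algebra_simps)
  moreover have "D 1 = 0"
    using leibniz[of 1 1] by simp
  then have "E (cst3 t) = 0" for t
    using scalar[of t 1] by (simp add: E_def)
  moreover have "E (X3 * b) = X3 * E b" "E (Y3 * b) = Y3 * E b" "E (Z3 * b) = Z3 * E b" for b
    by (simp_all add: E_def leibniz d3_rules algebra_simps)
  ultimately have "E a = 0"
    by (rule fps3_map_eq_0)
  then show ?thesis
    by (simp add: E_def)
qed

lemma eq_neg_imp_eq_0: "x = - x \<Longrightarrow> x = (0::'a::{idom,semiring_char_0})"
  by (metis add_eq_0_iff mult_2 mult_eq_0_iff zero_neq_numeral)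

definition orthogonal_curl3 :: "fps3 \<Rightarrow> fps3 \<Rightarrow> fps3 \<Rightarrow> bool" where
  "orthogonal_curl3 f g h \<longleftrightarrow>
     f * (dy3 h - dz3 g) + g * (dz3 f - dx3 h) + h * (dx3 g - dy3 f) = 0"

lemma poisson_triple3_orthogonal_curl3:
  assumes "poisson_triple3 f g h"
  shows "orthogonal_curl3 f g h"
proof -
  obtain P where PB: "poisson_bracket3 P" and f: "P Y3 Z3 = f" and g: "P Z3 X3 = g"
    and h: "P X3 Y3 = h"
    using assms unfolding poisson_triple3_def by blast
  have add: "\<And>a b c. P (a + b) c = P a c + P b c"
    and scalar: "\<And>t a b. P (cst3 t * a) b = cst3 t * P a b"
    and anti: "\<And>a b. P a b = - P b a"
    and leibniz: "\<And>a b c. P (a * b) c = a * P b c + b * P a c"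
    and jacobi: "\<And>a b c. P a (P b c) + P b (P c a) + P c (P a b) = 0"
    using PB unfolding poisson_bracket3_def by blast+
  have expand: "P c a = - (dx3 a * P X3 c + dy3 a * P Y3 c + dz3 a * P Z3 c)" for c a
    using derivation3_expand[where D = "\<lambda>a. P a c" and a = a, OF add scalar leibniz] anti[of c a]
    by simp
  have self: "P a a = 0" for a
    using anti[of a a] by (rule eq_neg_imp_eq_0)
  have YX: "P Y3 X3 = - h" and XZ: "P X3 Z3 = - g" and ZY: "P Z3 Y3 = - f"
    using anti[of Y3 X3] anti[of X3 Z3] anti[of Z3 Y3] f g h by simp_all
  have X: "P X3 f = dy3 f * h - dz3 f * g"
    using expand[of X3 f] by (simp add: self YX g)
  have Y: "P Y3 g = dz3 g * f - dx3 g * h"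
    using expand[of Y3 g] by (simp add: self h ZY)
  have Z: "P Z3 h = dx3 h * g - dy3 h * f"
    using expand[of Z3 h] by (simp add: self XZ f)
  have "f * (dy3 h - dz3 g) + g * (dz3 f - dx3 h) + h * (dx3 g - dy3 f)
      = - (P X3 f + P Y3 g + P Z3 h)"
    unfolding X Y Z by (simp add: algebra_simps)
  also have "\<dots> = 0"
    using jacobi[of X3 Y3 Z3] f g h by simp
  finally show ?thesis
    unfolding orthogonal_curl3_def .
qed

text \<open>Method of characteristics: \<open>d\<close> restricted to \<open>z = 0\<close> solves \<open>d\<^sub>y = q d\<^sub>x\<close> with
  \<open>d = x\<close> on \<open>y = z = 0\<close>, and is then transported by \<open>d\<^sub>z = r d\<^sub>x\<close>.  The integrability
  condition makes \<open>d\<^sub>y - q d\<^sub>x\<close> a solution of the same transport equation, so it vanishes.\<close>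
lemma frobenius3_first_integral:
  assumes integrable: "dy3 r - dz3 q = q * dx3 r - r * dx3 q"
  shows "\<exists>d. \<not> in_max3 (dx3 d) \<and> dy3 d = q * dx3 d \<and> dz3 d = r * dx3 d"
proof -
  obtain e :: "complex fps fps" where e0: "e $ 0 = fps_X"
    and e: "fps_deriv e = q $ 0 * fps_map fps_deriv e"
    using fps_linear_ode_exists[OF of_nat_Suc_dvd_1_fps] by blast
  obtain d :: fps3 where d0: "d $ 0 = e" and d: "fps_deriv d = r * fps_map (fps_map fps_deriv) d"
    using fps_linear_ode_exists[OF of_nat_Suc_dvd_1_fps2] by blast
  have dz: "dz3 d = r * dx3 d"
    using d by (simp add: dz3_def dx3_eq)
  define G where "G = dy3 d - q * dx3 d"
  have "dz3 G = r * dx3 G + (dy3 r - dz3 q - q * dx3 r + r * dx3 q) * dx3 d"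
    unfolding G_def by (simp add: d3_rules dz3_dx3 dz3_dy3 dx3_dy3 dz algebra_simps)
  also have "dy3 r - dz3 q - q * dx3 r + r * dx3 q = 0"
    using integrable by (simp add: algebra_simps)
  finally have "fps_deriv G = r * fps_map (fps_map fps_deriv) G"
    by (simp add: dz3_def dx3_eq)
  moreover have "G $ 0 = 0"
    using e d0 by (simp add: G_def dy3_eq dx3_eq fps_mult_nth_0)
  ultimately have "G = 0"
    using fps_linear_ode_zero[where L = "fps_map fps_deriv", OF of_nat_Suc_dvd_1_fps2
        derivation_0[OF derivation_fps_map[OF derivation_fps_deriv]]] by blast
  moreover have "\<not> in_max3 (dx3 d)"
    using d0 e0 by (simp add: in_max3_def dx3_eq)
  ultimately show ?thesis
    using dz by (auto simp: G_def)
qed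

lemma m_exact_if_not_in_max3:
  assumes "orthogonal_curl3 f g h" and "\<not> in_max3 f"
  shows "\<exists>b d. f = b * dx3 d \<and> g = b * dy3 d \<and> h = b * dz3 d"
proof -
  obtain f' where f': "f * f' = 1"
    using fps3_dvd_1_if_not_in_max3[OF \<open>\<not> in_max3 f\<close>] by (metis dvdE)
  define q r where "q = g * f'" and "r = h * f'"
  have g: "g = q * f" and h: "h = r * f"
    using f' by (simp_all add: q_def r_def mult.commute mult.left_commute)
  have "f * f * (dy3 r - dz3 q - (q * dx3 r - r * dx3 q))
      = f * (dy3 h - dz3 g) + g * (dz3 f - dx3 h) + h * (dx3 g - dy3 f)"
    unfolding g h by (simp add: d3_rules algebra_simps)
  then have "dy3 r - dz3 q = q * dx3 r - r * dx3 q"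
    using assms(1) f' by (auto simp: orthogonal_curl3_def)
  then obtain d where d: "\<not> in_max3 (dx3 d)" "dy3 d = q * dx3 d" "dz3 d = r * dx3 d"
    using frobenius3_first_integral by blast
  then obtain u where u: "dx3 d * u = 1"
    using fps3_dvd_1_if_not_in_max3 by (metis dvdE)
  have "f = (f * u) * dx3 d" "g = (f * u) * dy3 d" "h = (f * u) * dz3 d"
    using u by (simp_all add: d g h algebra_simps)
  then show ?thesis
    by blast
qed

definition fps_swap :: "'a fps fps \<Rightarrow> 'a fps fps" where
  "fps_swap a = Abs_fps (\<lambda>j. Abs_fps (\<lambda>i. a $ i $ j))"

lemma fps_swap_nth [simp]: "fps_swap a $ j $ i = a $ i $ j"
  by (simp add: fps_swap_def)

lemma fps_swap_add: "fps_swap (a + b) = fps_swap a + fps_swap b"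
  by (intro fps_ext) simp

lemma fps_swap_sum: "fps_swap (sum f S) = (\<Sum>i\<in>S. fps_swap (f i))"
  by (intro fps_ext) (simp add: fps_sum_nth)

lemma fps_swap_mult: "fps_swap (a * b) = fps_swap a * fps_swap (b :: 'a::comm_semiring_1 fps fps)"
proof (intro fps_ext)
  fix j i
  have "fps_swap (a * b) $ j $ i = (\<Sum>p=0..i. \<Sum>q=0..j. a $ p $ q * b $ (i - p) $ (j - q))"
    by (simp add: fps_mult_nth fps_sum_nth)
  also have "\<dots> = (\<Sum>q=0..j. \<Sum>p=0..i. a $ p $ q * b $ (i - p) $ (j - q))"
    by (rule sum.swap)
  also have "\<dots> = (fps_swap a * fps_swap b) $ j $ i"
    by (simp add: fps_mult_nth fps_sum_nth)
  finally show "fps_swap (a * b) $ j $ i = (fps_swap a * fps_swap b) $ j $ i" .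
qed

lemma fps_swap_of_nat [simp]: "fps_swap (of_nat n) = of_nat n"
  by (intro fps_ext) (simp add: fps_of_nat[symmetric])

lemma fps_swap_fps_deriv: "fps_swap (fps_deriv a) = fps_map fps_deriv (fps_swap a)"
  by (intro fps_ext) (simp add: fps_of_nat[symmetric])

definition swap_xy3 :: "fps3 \<Rightarrow> fps3" where
  "swap_xy3 = fps_map fps_swap"

lemma swap_xy3_swap_xy3 [simp]: "swap_xy3 (swap_xy3 a) = a"
  by (intro fps_ext) (simp add: swap_xy3_def)

lemma swap_xy3_add: "swap_xy3 (a + b) = swap_xy3 a + swap_xy3 b"
  by (rule fps_ext) (simp add: swap_xy3_def fps_swap_add)

lemma swap_xy3_diff: "swap_xy3 (a - b) = swap_xy3 a - swap_xy3 b"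
  by (intro fps_ext) (simp add: swap_xy3_def)

lemma swap_xy3_mult: "swap_xy3 (a * b) = swap_xy3 a * swap_xy3 b"
  by (rule fps_ext) (simp add: swap_xy3_def fps_mult_nth fps_swap_sum fps_swap_mult)

lemma dx3_swap_xy3: "dx3 (swap_xy3 a) = swap_xy3 (dy3 a)"
  by (rule fps_ext) (simp add: swap_xy3_def dx3_eq dy3_eq fps_swap_fps_deriv)

lemma dy3_swap_xy3: "dy3 (swap_xy3 a) = swap_xy3 (dx3 a)"
  using dx3_swap_xy3[of "swap_xy3 a"] by (metis swap_xy3_swap_xy3)

lemma dz3_swap_xy3: "dz3 (swap_xy3 a) = swap_xy3 (dz3 a)"
  by (rule fps_ext) (simp add: swap_xy3_def dz3_def fps_swap_mult del: of_nat_Suc)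

lemma in_max3_swap_xy3 [simp]: "in_max3 (swap_xy3 a) \<longleftrightarrow> in_max3 a"
  by (simp add: in_max3_def swap_xy3_def)

lemma orthogonal_curl3_swap_xy3:
  assumes "orthogonal_curl3 f g h"
  shows "orthogonal_curl3 (swap_xy3 g) (swap_xy3 f) (swap_xy3 h)"
proof -
  have "swap_xy3 g * (dy3 (swap_xy3 h) - dz3 (swap_xy3 f))
      + swap_xy3 f * (dz3 (swap_xy3 g) - dx3 (swap_xy3 h))
      + swap_xy3 h * (dx3 (swap_xy3 f) - dy3 (swap_xy3 g))
      = swap_xy3 (0 - (f * (dy3 h - dz3 g) + g * (dz3 f - dx3 h) + h * (dx3 g - dy3 f)))"
    by (simp add: dx3_swap_xy3 dy3_swap_xy3 dz3_swap_xy3 swap_xy3_add swap_xy3_diff swap_xy3_mult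
        algebra_simps)
  also have "\<dots> = 0"
    unfolding assms[unfolded orthogonal_curl3_def] by (simp add: swap_xy3_def fps_eq_iff)
  finally show ?thesis
    unfolding orthogonal_curl3_def .
qed

theorem lemma2p3:
  fixes f g h :: fps3
  assumes "poisson_triple3 f g h"
    and "\<not> (in_max3 f \<and> in_max3 g)" and "\<not> (in_max3 f \<and> in_max3 h)"
    and "\<not> (in_max3 g \<and> in_max3 h)"
  shows "\<exists>b d :: fps3. f = b * dx3 d \<and> g = b * dy3 d \<and> h = b * dz3 d"
proof (cases "in_max3 f")
  case False
  then show ?thesis
    using m_exact_if_not_in_max3 poisson_triple3_orthogonal_curl3 assms(1) by blast
next
  case True
  then have "\<not> in_max3 (swap_xy3 g)"
    using assms(2) by simp
  then obtain b d where "swap_xy3 g = b * dx3 d" "swap_xy3 f = b * dy3 d" "swap_xy3 h = b * dz3 d"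
    using m_exact_if_not_in_max3 orthogonal_curl3_swap_xy3 poisson_triple3_orthogonal_curl3 assms(1)
    by blast
  then have "f = swap_xy3 b * dx3 (swap_xy3 d)" "g = swap_xy3 b * dy3 (swap_xy3 d)"
    "h = swap_xy3 b * dz3 (swap_xy3 d)"
    by (metis swap_xy3_swap_xy3 swap_xy3_mult dx3_swap_xy3 dy3_swap_xy3 dz3_swap_xy3)+
  then show ?thesis
    by blast
qed

end
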